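(* Let $A$ and $B$ be Latin squares of order $n$. Then $A$ and $B$ are weak orthogonal if and only if they are left orthogonal.
   Context: $\{\ket k\}_{k=0}^{n-1}$ is the computational basis of $\mathbb C^n$. A quantum Latin square (QLS) of order $n$ is an $n\times n$ array of vectors of $\mathbb C^n$ in which every row and every column is an orthonormal basis; the entry in column $i$, row $j$ of $\mathcal Q$ is $\ket{Q_{ij}}$. A Latin square is a QLS all of whose entries are computational basis states; identify it with the array of labels $L_{ij}\in\{0,\dots,n-1\}$ where $\ket{L_{ij}}$ is the entry. Two QLSs $\mathcal P,\mathcal Q$ are weak orthogonal if for all $i,j$ there is a unique $t$ with $\sum_{k=0}^{n-1}\ket k\langle Q_{ki}|P_{kj}\rangle=\ket t$. Two Latin squares $A,B$ are orthogonal if the pairs $(A_{ij},B_{ij})$ over all positions $(i,j)$ give all $n^2$ pairs of labels. The left conjugate of a Latin square $L$ is the Latin square $L'$ defined by $L'_{ik}=j$ if and only if $L_{ij}=k$ (left division in the quasigroup with Cayley table $L$). Two Latin squares are left orthogonal if their left conjugates are orthogonal. *)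

theory Defs
  imports Complex_Main
begin

text \<open>Vectors of C^n are represented as functions nat => complex, only the
coordinates 0..n-1 being relevant.  An n x n array of vectors is a function
Q :: nat => nat => (nat => complex), where Q i j is the entry in column i, row j.\<close>

type_synonym cvec = "nat \<Rightarrow> complex"

definition ket :: "nat \<Rightarrow> cvec" where
  "ket t = (\<lambda>k. if k = t then 1 else 0)"

definition vec_eq :: "nat \<Rightarrow> cvec \<Rightarrow> cvec \<Rightarrow> bool" where
  "vec_eq n u v \<longleftrightarrow> (\<forall>k<n. u k = v k)"

definition braket :: "nat \<Rightarrow> cvec \<Rightarrow> cvec \<Rightarrow> complex" where
  "braket n u v = (\<Sum>k<n. cnj (u k) * v k)"

definition orthonormal_basis :: "nat \<Rightarrow> (nat \<Rightarrow> cvec) \<Rightarrow> bool" where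
  "orthonormal_basis n f \<longleftrightarrow>
     (\<forall>a<n. \<forall>b<n. braket n (f a) (f b) = (if a = b then 1 else 0)) \<and>
     (\<forall>v. \<exists>c. vec_eq n v (\<lambda>k. \<Sum>m<n. c m * f m k))"

definition is_QLS :: "nat \<Rightarrow> (nat \<Rightarrow> nat \<Rightarrow> cvec) \<Rightarrow> bool" where
  "is_QLS n Q \<longleftrightarrow>
     (\<forall>j<n. orthonormal_basis n (\<lambda>i. Q i j)) \<and>
     (\<forall>i<n. orthonormal_basis n (\<lambda>j. Q i j))"

definition weak_orthogonal :: "nat \<Rightarrow> (nat \<Rightarrow> nat \<Rightarrow> cvec) \<Rightarrow> (nat \<Rightarrow> nat \<Rightarrow> cvec) \<Rightarrow> bool" where
  "weak_orthogonal n P Q \<longleftrightarrow>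
     (\<forall>i<n. \<forall>j<n. \<exists>!t. t < n \<and>
        vec_eq n (\<lambda>k. braket n (Q k i) (P k j)) (ket t))"

definition kets :: "(nat \<Rightarrow> nat \<Rightarrow> nat) \<Rightarrow> nat \<Rightarrow> nat \<Rightarrow> cvec" where
  "kets L = (\<lambda>i j. ket (L i j))"

definition latin_square :: "nat \<Rightarrow> (nat \<Rightarrow> nat \<Rightarrow> nat) \<Rightarrow> bool" where
  "latin_square n L \<longleftrightarrow> (\<forall>i<n. \<forall>j<n. L i j < n) \<and> is_QLS n (kets L)"

definition orthogonal_LS :: "nat \<Rightarrow> (nat \<Rightarrow> nat \<Rightarrow> nat) \<Rightarrow> (nat \<Rightarrow> nat \<Rightarrow> nat) \<Rightarrow> bool" where
  "orthogonal_LS n A B \<longleftrightarrow>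
     (\<lambda>(i,j). (A i j, B i j)) ` ({..<n} \<times> {..<n}) = {..<n} \<times> {..<n}"

definition left_conjugate :: "nat \<Rightarrow> (nat \<Rightarrow> nat \<Rightarrow> nat) \<Rightarrow> nat \<Rightarrow> nat \<Rightarrow> nat" where
  "left_conjugate n L = (\<lambda>i k. THE j. j < n \<and> L i j = k)"

definition left_orthogonal :: "nat \<Rightarrow> (nat \<Rightarrow> nat \<Rightarrow> nat) \<Rightarrow> (nat \<Rightarrow> nat \<Rightarrow> nat) \<Rightarrow> bool" where
  "left_orthogonal n A B \<longleftrightarrow> orthogonal_LS n (left_conjugate n A) (left_conjugate n B)"

end

theory Submission
  imports Defs
begin

text \<open>For Latin squares the amplitude \<open>\<langle>B k i|A k j\<rangle>\<close> is 1 if \<open>B k i = A k j\<close> and 0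
otherwise, so weak orthogonality says that for all \<open>i, j\<close> there is exactly one \<open>k\<close>
with \<open>B k i = A k j\<close>.  Such \<open>k\<close> correspond bijectively to the pairs \<open>(k, x)\<close> with
\<open>A' k x = j\<close> and \<open>B' k x = i\<close> (namely \<open>x = A k j\<close>), so the condition says that
\<open>(k, x) \<mapsto> (A' k x, B' k x)\<close> is a bijection of \<open>[n]\<^sup>2\<close>; on a finite set this is the
same as surjectivity, i.e. orthogonality of the left conjugates.\<close>

lemma braket_ket: "braket n (ket a) (ket b) = (if a = b \<and> a < n then 1 else 0)"
proof -
  have "braket n (ket a) (ket b) = (\<Sum>k<n. if k = a \<and> a = b then 1 else 0)"
    unfolding braket_def ket_def by (intro sum.cong) auto
  also have "\<dots> = (if a = b \<and> a < n then 1 else 0)"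
    by (cases "a = b") (auto simp: sum.delta)
  finally show ?thesis .
qed

lemma latin_square_less:
  assumes "latin_square n L" "i < n" "j < n"
  shows "L i j < n"
  using assms unfolding latin_square_def by blast

lemma latin_square_inj_on_column:
  assumes "latin_square n L" "i < n"
  shows "inj_on (L i) {..<n}"
proof (rule inj_onI)
  fix a b assume ab: "a \<in> {..<n}" "b \<in> {..<n}" "L i a = L i b"
  have "orthonormal_basis n (\<lambda>j. kets L i j)"
    using assms unfolding latin_square_def is_QLS_def by blast
  then have "braket n (ket (L i a)) (ket (L i b)) = (if a = b then 1 else 0)"
    using ab unfolding orthonormal_basis_def kets_def by blast
  moreover have "braket n (ket (L i a)) (ket (L i b)) = 1"
    using latin_square_less[OF assms] ab by (simp add: braket_ket)
  ultimately show "a = b" by (metis zero_neq_one)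
qed

lemma latin_square_bij_betw_column:
  assumes "latin_square n L" "i < n"
  shows "bij_betw (L i) {..<n} {..<n}"
  using latin_square_inj_on_column[OF assms] latin_square_less[OF assms]
  by (simp add: bij_betw_def endo_inj_surj image_subset_iff)

lemma left_conjugate_less_and_inverse:
  assumes "latin_square n L" "i < n" "k < n"
  shows "left_conjugate n L i k < n" and "L i (left_conjugate n L i k) = k"
proof -
  have "k \<in> L i ` {..<n}"
    using latin_square_bij_betw_column[OF assms(1,2)] assms(3) by (simp add: bij_betw_def)
  then have "\<exists>!j. j < n \<and> L i j = k"
    using latin_square_inj_on_column[OF assms(1,2)] by (auto simp: inj_on_def)
  then have "left_conjugate n L i k < n \<and> L i (left_conjugate n L i k) = k"
    unfolding left_conjugate_def by (rule theI')
  then show "left_conjugate n L i k < n" and "L i (left_conjugate n L i k) = k"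
    by blast+
qed

lemma left_conjugate_eq_iff:
  assumes "latin_square n L" "i < n" "j < n" "k < n"
  shows "left_conjugate n L i k = j \<longleftrightarrow> L i j = k"
  using left_conjugate_less_and_inverse[OF assms(1,2,4)]
    latin_square_inj_on_column[OF assms(1,2)] assms(3)
  by (auto simp: inj_on_def)

lemma image_eq_self_iff_ex1_preimage:
  assumes "finite S" "f ` S \<subseteq> S"
  shows "f ` S = S \<longleftrightarrow> (\<forall>y\<in>S. \<exists>!x. x \<in> S \<and> f x = y)"
proof
  assume "f ` S = S"
  with assms(1) have "inj_on f S" by (simp add: finite_surj_inj)
  with \<open>f ` S = S\<close> show "\<forall>y\<in>S. \<exists>!x. x \<in> S \<and> f x = y"
    by (force simp: inj_on_def)
qed (use assms(2) in blast)

lemma ex1_image_iff: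
  assumes "inj g"
  shows "(\<exists>!y. \<exists>x. P x \<and> y = g x) \<longleftrightarrow> (\<exists>!x. P x)"
proof
  assume "\<exists>!y. \<exists>x. P x \<and> y = g x"
  then show "\<exists>!x. P x" using assms by (metis injD)
qed metis

lemma weak_orthogonal_kets_iff:
  assumes "\<forall>k<n. \<forall>i<n. B k i < n"
  shows "weak_orthogonal n (kets A) (kets B) \<longleftrightarrow>
    (\<forall>i<n. \<forall>j<n. \<exists>!k. k < n \<and> B k i = A k j)"
proof -
  have "vec_eq n (\<lambda>k. braket n (kets B k i) (kets A k j)) (ket t) \<longleftrightarrow>
      (\<forall>k<n. B k i = A k j \<longleftrightarrow> k = t)" if "i < n" for i j t
    using assms that unfolding vec_eq_def kets_def braket_ket by (auto simp: ket_def)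
  moreover have "(\<exists>!t. t < n \<and> (\<forall>k<n. P k \<longleftrightarrow> k = t)) \<longleftrightarrow> (\<exists>!k. k < n \<and> P k)"
    for P :: "nat \<Rightarrow> bool"
    by blast
  ultimately show ?thesis
    unfolding weak_orthogonal_def by simp
qed

lemma ball_square_swap:
  "(\<forall>y\<in>{..<n} \<times> {..<n}. Q y) \<longleftrightarrow> (\<forall>i<n. \<forall>j<n. Q (j, i))"
  by auto

lemma left_orthogonal_iff:
  assumes A: "latin_square n A" and B: "latin_square n B"
  shows "left_orthogonal n A B \<longleftrightarrow> (\<forall>i<n. \<forall>j<n. \<exists>!k. k < n \<and> B k i = A k j)"
proof -
  let ?f = "\<lambda>(k, x). (left_conjugate n A k x, left_conjugate n B k x)"
  let ?S = "{..<n} \<times> {..<n}"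
  have "?f ` ?S \<subseteq> ?S"
    using left_conjugate_less_and_inverse(1)[OF A] left_conjugate_less_and_inverse(1)[OF B]
    by auto
  have fiber_ex1: "(\<exists>!p. p \<in> ?S \<and> ?f p = (j, i)) \<longleftrightarrow> (\<exists>!k. k < n \<and> B k i = A k j)"
    if "i < n" "j < n" for i j
  proof -
    have fiber: "p \<in> ?S \<and> ?f p = (j, i) \<longleftrightarrow>
        (\<exists>k. k < n \<and> B k i = A k j \<and> p = (k, A k j))" for p
      using that left_conjugate_eq_iff[OF A] left_conjugate_eq_iff[OF B]
        left_conjugate_less_and_inverse[OF A] latin_square_less[OF A]
      by (cases p) (auto, metis)
    show ?thesis
      unfolding fiber using ex1_image_iff[of "\<lambda>k. (k, A k j)" "\<lambda>k. k < n \<and> B k i = A k j"]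
      by (simp add: inj_def)
  qed
  have "left_orthogonal n A B \<longleftrightarrow> (\<forall>y\<in>?S. \<exists>!p. p \<in> ?S \<and> ?f p = y)"
    using \<open>?f ` ?S \<subseteq> ?S\<close> unfolding left_orthogonal_def orthogonal_LS_def
    by (simp add: image_eq_self_iff_ex1_preimage)
  also have "\<dots> \<longleftrightarrow> (\<forall>i<n. \<forall>j<n. \<exists>!p. p \<in> ?S \<and> ?f p = (j, i))"
    by (rule ball_square_swap)
  also have "\<dots> \<longleftrightarrow> (\<forall>i<n. \<forall>j<n. \<exists>!k. k < n \<and> B k i = A k j)"
    using fiber_ex1 by simp
  finally show ?thesis .
qed

theorem lemma21:
  fixes n :: nat and A B :: "nat \<Rightarrow> nat \<Rightarrow> nat"
  assumes "latin_square n A" and "latin_square n B"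
  shows "weak_orthogonal n (kets A) (kets B) \<longleftrightarrow> left_orthogonal n A B"
  using weak_orthogonal_kets_iff[of n B A] left_orthogonal_iff[OF assms]
    latin_square_less[OF assms(2)]
  by simp

end
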